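(* Let $\mathcal U\subset Q\times Q$ be a symmetric $D$-type subset and let $s_R:\mathcal U''\to\mathcal U/G$ be a semi-local right splitting of the discrete Atiyah sequence in the category of fiber bundles with a section over $Q/G$, i.e. a smooth map with $F_2\circ s_R=\mathrm{id}_{\mathcal U''}$ and $s_R(\pi(q),\pi(q))=[q,q]$ for all $q$. Let $\mathcal A_d:\mathcal U\to G$ be the discrete connection form associated with $s_R$, i.e. the unique smooth $\mathcal A_d$ with $\mathcal A_d(l^Q_{g_0}(q_0),l^Q_{g_1}(q_1))=g_1\mathcal A_d(q_0,q_1)g_0^{-1}$, $\mathcal A_d(q,q)=e$, and $s_R(\pi(q_0),\pi(q_1))=[q_0,l^Q_{\mathcal A_d(q_0,q_1)^{-1}}(q_1)]$ for all $(q_0,q_1)\in\mathcal U$. Then $s_R$ is a morphism of local Lie groupoids from $\mathcal U''$ to $\mathcal U/G$ if and only if $\mathcal A_d$ is flat.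
   Context: $G$ is a Lie group acting freely and properly on the left on $Q$ by $l^Q$; $\pi:Q\to Q/G$ is the quotient; $[q_0,q_1]$ denotes the class in $(Q\times Q)/G$ of the diagonal action, and $F_2([q_0,q_1])=(\pi(q_0),\pi(q_1))$. $\mathcal V_d=\{(q,l^Q_g(q))\}$. An open $\mathcal U\subset Q\times Q$ is of $D$-type if it contains $\mathcal V_d$ and is invariant under $(g_0,g_1)\cdot(q_0,q_1)=(l^Q_{g_0}(q_0),l^Q_{g_1}(q_1))$; symmetric if invariant under $(q_0,q_1)\mapsto(q_1,q_0)$. $\mathcal U''=(\pi\times\pi)(\mathcal U)$. Local Lie groupoid over $M$: manifold $G$, submersions $\alpha,\beta:G\to M$, diffeomorphism $i$ ($g\mapsto g^{-1}$), smooth $\epsilon:M\to G$, smooth $m:G_m\to G$ ($(g_1,g_2)\mapsto g_1g_2$) on an open $G_m\subset G_2=\{(g_1,g_2):\beta(g_1)=\alpha(g_2)\}$, with: $\alpha\epsilon=\beta\epsilon=\mathrm{id}$; $(g_1,g_2)\in G_m\Rightarrow(g_2^{-1},g_1^{-1})\in G_m$ and $(g_1g_2)^{-1}=g_2^{-1}g_1^{-1}$; $(\epsilon\alpha(g),g),(g,\epsilon\beta(g))\in G_m$ and $\epsilon\alpha(g)g=g=g\epsilon\beta(g)$; $(g,g^{-1}),(g^{-1},g)\in G_m$, $gg^{-1}=\epsilon\alpha(g)$, $g^{-1}g=\epsilon\beta(g)$; if $(g_1,g_2),(g_2,g_3),(g_1,g_2g_3)\in G_m$ then $(g_1g_2,g_3)\in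 G_m$ and $(g_1g_2)g_3=g_1(g_2g_3)$. A morphism $F:G\to G'$ of local Lie groupoids is smooth with $F(\epsilon(M))\subset\epsilon'(M')$ and, for $(g_1,g_2)\in G_m$, $(F(g_1),F(g_2))\in G'_m$ and $F(g_1g_2)=F(g_1)F(g_2)$. If $\Gamma$ is a Lie groupoid and $U\subset\Gamma$ open with $U^{-1}\subset U$, $\epsilon(M)\subset U$, then $U$ is a local Lie groupoid with restricted structure maps and $U_m=U_2\cap m^{-1}(U)$. Here $\mathcal U''$ carries this structure as an open subset of the pair groupoid $(Q/G)\times(Q/G)$ (source/target the projections, $(r_0,r_1)(r_1,r_2)=(r_0,r_2)$), and $\mathcal U/G$ as an open subset of the Atiyah groupoid $(Q\times Q)/G$ (source $[q_0,q_1]\mapsto\pi(q_0)$, target $\pi(q_1)$, $[q_0,q_1][q_1,q_2]=[q_0,q_2]$, unit $[q,q]$, inverse $[q_1,q_0]$). Flatness: with $\mathcal U^{(3)}=\{(q_0,q_1,q_2):(q_i,q_j)\in\mathcal U\ \forall i,j\}$, the discrete curvature is $\mathcal B_d(q_0,q_1,q_2)=\mathcal A_d(q_0,q_2)^{-1}\mathcal A_d(q_1,q_2)\mathcal A_d(q_0,q_1)$, and $\mathcal A_d$ is flat if $\mathcal B_d\equiv e$ on $\mathcal U^{(3)}$. *)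

theory Defs
  imports "HOL-Algebra.Group" "HOL-Analysis.Analysis"
begin

definition free_left_action :: "('g, 'b) monoid_scheme \<Rightarrow> ('g \<Rightarrow> 'q \<Rightarrow> 'q) \<Rightarrow> bool" where
  "free_left_action G act \<longleftrightarrow> group G
     \<and> (\<forall>q. act \<one>\<^bsub>G\<^esub> q = q)
     \<and> (\<forall>g\<in>carrier G. \<forall>h\<in>carrier G. \<forall>q. act (g \<otimes>\<^bsub>G\<^esub> h) q = act g (act h q))
     \<and> (\<forall>g\<in>carrier G. \<forall>q. act g q = q \<longrightarrow> g = \<one>\<^bsub>G\<^esub>)"

text \<open>The quotient map \<pi> : Q \<rightarrow> Q/G; an element of Q/G is a G-orbit.\<close>
definition orb :: "('g, 'b) monoid_scheme \<Rightarrow> ('g \<Rightarrow> 'q \<Rightarrow> 'q) \<Rightarrow> 'q \<Rightarrow> 'q set" where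
  "orb G act q = {act g q | g. g \<in> carrier G}"

definition aclass :: "('g, 'b) monoid_scheme \<Rightarrow> ('g \<Rightarrow> 'q \<Rightarrow> 'q) \<Rightarrow> 'q \<Rightarrow> 'q \<Rightarrow> ('q \<times> 'q) set" where
  "aclass G act q0 q1 = {(act g q0, act g q1) | g. g \<in> carrier G}"

definition F2 :: "('g, 'b) monoid_scheme \<Rightarrow> ('g \<Rightarrow> 'q \<Rightarrow> 'q) \<Rightarrow> ('q \<times> 'q) set \<Rightarrow> 'q set \<times> 'q set" where
  "F2 G act c = (SOME r. \<exists>q0 q1. c = aclass G act q0 q1 \<and> r = (orb G act q0, orb G act q1))"

definition Vd :: "('g, 'b) monoid_scheme \<Rightarrow> ('g \<Rightarrow> 'q \<Rightarrow> 'q) \<Rightarrow> ('q \<times> 'q) set" where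
  "Vd G act = {(q, act g q) | q g. g \<in> carrier G}"

definition D_type :: "('g, 'b) monoid_scheme \<Rightarrow> ('g \<Rightarrow> 'q \<Rightarrow> 'q) \<Rightarrow> ('q::topological_space \<times> 'q) set \<Rightarrow> bool" where
  "D_type G act U \<longleftrightarrow> open U \<and> Vd G act \<subseteq> U
     \<and> (\<forall>(q0,q1)\<in>U. \<forall>g0\<in>carrier G. \<forall>g1\<in>carrier G. (act g0 q0, act g1 q1) \<in> U)"

definition symmetric_set :: "('q \<times> 'q) set \<Rightarrow> bool" where
  "symmetric_set U \<longleftrightarrow> (\<forall>(q0,q1)\<in>U. (q1,q0) \<in> U)"

definition Upp :: "('g, 'b) monoid_scheme \<Rightarrow> ('g \<Rightarrow> 'q \<Rightarrow> 'q) \<Rightarrow> ('q \<times> 'q) set \<Rightarrow> ('q set \<times> 'q set) set" where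
  "Upp G act U = (\<lambda>(q0,q1). (orb G act q0, orb G act q1)) ` U"

definition UmodG :: "('g, 'b) monoid_scheme \<Rightarrow> ('g \<Rightarrow> 'q \<Rightarrow> 'q) \<Rightarrow> ('q \<times> 'q) set \<Rightarrow> ('q \<times> 'q) set set" where
  "UmodG G act U = (\<lambda>(q0,q1). aclass G act q0 q1) ` U"

record ('a, 'm) lgpd =
  lg_carrier :: "'a set"
  lg_base :: "'m set"
  lg_src :: "'a \<Rightarrow> 'm"
  lg_tgt :: "'a \<Rightarrow> 'm"
  lg_unit :: "'m \<Rightarrow> 'a"
  lg_inv :: "'a \<Rightarrow> 'a"
  lg_mult :: "'a \<Rightarrow> 'a \<Rightarrow> 'a"
  lg_dom :: "('a \<times> 'a) set"

text \<open>Morphism of local groupoids (smoothness not expressible).\<close>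
definition lg_morphism :: "('a, 'm) lgpd \<Rightarrow> ('b, 'n) lgpd \<Rightarrow> ('a \<Rightarrow> 'b) \<Rightarrow> bool" where
  "lg_morphism A B F \<longleftrightarrow>
     F ` lg_carrier A \<subseteq> lg_carrier B
   \<and> F ` (lg_unit A ` lg_base A) \<subseteq> lg_unit B ` lg_base B
   \<and> (\<forall>(g1,g2)\<in>lg_dom A. (F g1, F g2) \<in> lg_dom B
        \<and> F (lg_mult A g1 g2) = lg_mult B (F g1) (F g2))"

text \<open>The open subset U'' of the pair groupoid (Q/G) x (Q/G) as a local groupoid:
  U_m = U_2 \<inter> m^{-1}(U).\<close>
definition pair_lgpd :: "'m set \<Rightarrow> ('m \<times> 'm) set \<Rightarrow> ('m \<times> 'm, 'm) lgpd" where
  "pair_lgpd M V = \<lparr> lg_carrier = V, lg_base = M, lg_src = fst, lg_tgt = snd,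
     lg_unit = (\<lambda>r. (r, r)), lg_inv = (\<lambda>(r0,r1). (r1,r0)),
     lg_mult = (\<lambda>(r0,r1) (r1',r2). (r0,r2)),
     lg_dom = {((r0,r1),(r1',r2)). (r0,r1) \<in> V \<and> (r1',r2) \<in> V \<and> r1 = r1' \<and> (r0,r2) \<in> V} \<rparr>"

definition atiyah_src :: "('g, 'b) monoid_scheme \<Rightarrow> ('g \<Rightarrow> 'q \<Rightarrow> 'q) \<Rightarrow> ('q \<times> 'q) set \<Rightarrow> 'q set" where
  "atiyah_src G act c = fst (F2 G act c)"

definition atiyah_tgt :: "('g, 'b) monoid_scheme \<Rightarrow> ('g \<Rightarrow> 'q \<Rightarrow> 'q) \<Rightarrow> ('q \<times> 'q) set \<Rightarrow> 'q set" where
  "atiyah_tgt G act c = snd (F2 G act c)"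

definition atiyah_inv :: "('g, 'b) monoid_scheme \<Rightarrow> ('g \<Rightarrow> 'q \<Rightarrow> 'q) \<Rightarrow> ('q \<times> 'q) set \<Rightarrow> ('q \<times> 'q) set" where
  "atiyah_inv G act c = (SOME c'. \<exists>q0 q1. c = aclass G act q0 q1 \<and> c' = aclass G act q1 q0)"

definition atiyah_mult :: "('g, 'b) monoid_scheme \<Rightarrow> ('g \<Rightarrow> 'q \<Rightarrow> 'q) \<Rightarrow> ('q \<times> 'q) set \<Rightarrow> ('q \<times> 'q) set \<Rightarrow> ('q \<times> 'q) set" where
  "atiyah_mult G act c1 c2 = (SOME c. \<exists>q0 q1 q2. c1 = aclass G act q0 q1 \<and> c2 = aclass G act q1 q2
        \<and> c = aclass G act q0 q2)"

definition atiyah_lgpd :: "('g, 'b) monoid_scheme \<Rightarrow> ('g \<Rightarrow> 'q \<Rightarrow> 'q) \<Rightarrow> ('q \<times> 'q) set set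
      \<Rightarrow> (('q \<times> 'q) set, 'q set) lgpd" where
  "atiyah_lgpd G act W = \<lparr> lg_carrier = W, lg_base = range (orb G act),
     lg_src = atiyah_src G act, lg_tgt = atiyah_tgt G act,
     lg_unit = (\<lambda>r. SOME c. \<exists>q. r = orb G act q \<and> c = aclass G act q q),
     lg_inv = atiyah_inv G act,
     lg_mult = atiyah_mult G act,
     lg_dom = {(c1,c2). c1 \<in> W \<and> c2 \<in> W \<and> atiyah_tgt G act c1 = atiyah_src G act c2
                \<and> atiyah_mult G act c1 c2 \<in> W} \<rparr>"

definition U3 :: "('q \<times> 'q) set \<Rightarrow> ('q \<times> 'q \<times> 'q) set" where
  "U3 U = {(q0,q1,q2). (q0,q0) \<in> U \<and> (q0,q1) \<in> U \<and> (q0,q2) \<in> U \<and> (q1,q0) \<in> U \<and> (q1,q1) \<in> U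
      \<and> (q1,q2) \<in> U \<and> (q2,q0) \<in> U \<and> (q2,q1) \<in> U \<and> (q2,q2) \<in> U}"

definition discrete_curvature :: "('g, 'b) monoid_scheme \<Rightarrow> ('q \<Rightarrow> 'q \<Rightarrow> 'g) \<Rightarrow> 'q \<Rightarrow> 'q \<Rightarrow> 'q \<Rightarrow> 'g" where
  "discrete_curvature G Ad q0 q1 q2 = inv\<^bsub>G\<^esub> (Ad q0 q2) \<otimes>\<^bsub>G\<^esub> Ad q1 q2 \<otimes>\<^bsub>G\<^esub> Ad q0 q1"

definition flat :: "('g, 'b) monoid_scheme \<Rightarrow> ('q \<times> 'q) set \<Rightarrow> ('q \<Rightarrow> 'q \<Rightarrow> 'g) \<Rightarrow> bool" where
  "flat G U Ad \<longleftrightarrow> (\<forall>(q0,q1,q2)\<in>U3 U. discrete_curvature G Ad q0 q1 q2 = \<one>\<^bsub>G\<^esub>)"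

end

theory Submission
  imports Defs
begin

text \<open>Writing \<open>s\<^sub>R(\<pi> q\<^sub>i, \<pi> q\<^sub>j) = [q\<^sub>i, a\<^sub>i\<^sub>j\<inverse> q\<^sub>j]\<close> with
  \<open>a\<^sub>i\<^sub>j = \<A>\<^sub>d(q\<^sub>i, q\<^sub>j)\<close>, translate the second class by \<open>a\<^sub>0\<^sub>1\<inverse>\<close> so that the two
  classes compose in the Atiyah groupoid: \<open>s\<^sub>R(r\<^sub>0,r\<^sub>1) s\<^sub>R(r\<^sub>1,r\<^sub>2) = [q\<^sub>0, a\<^sub>0\<^sub>1\<inverse> a\<^sub>1\<^sub>2\<inverse> q\<^sub>2]\<close>.
  Since the action is free, this equals \<open>s\<^sub>R(r\<^sub>0,r\<^sub>2) = [q\<^sub>0, a\<^sub>0\<^sub>2\<inverse> q\<^sub>2]\<close> exactly when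
  \<open>a\<^sub>0\<^sub>2 = a\<^sub>1\<^sub>2 a\<^sub>0\<^sub>1\<close>, i.e. when the curvature at \<open>(q\<^sub>0,q\<^sub>1,q\<^sub>2)\<close> is trivial. The unit and
  source/target conditions for a morphism hold for every splitting, and the D-type and
  symmetry hypotheses let composable triples in \<open>\<U>''\<close> be lifted to triples in \<open>\<U>\<^sup>(\<^sup>3\<^sup>)\<close>.
  Only the formula expressing \<open>s\<^sub>R\<close> through \<open>\<A>\<^sub>d\<close> enters the argument.\<close>

locale free_action =
  fixes G :: "('g, 'b) monoid_scheme" (structure) and act :: "'g \<Rightarrow> 'q \<Rightarrow> 'q"
  assumes free: "free_left_action G act"
begin

sublocale group G
  using free unfolding free_left_action_def by blast

lemma act_one [simp]: "act \<one> q = q"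
  using free unfolding free_left_action_def by blast

lemma act_mult: "g \<in> carrier G \<Longrightarrow> h \<in> carrier G \<Longrightarrow> act (g \<otimes> h) q = act g (act h q)"
  using free unfolding free_left_action_def by blast

lemma act_fixed_point: "g \<in> carrier G \<Longrightarrow> act g q = q \<Longrightarrow> g = \<one>"
  using free unfolding free_left_action_def by blast

lemma act_inv_act [simp]: "g \<in> carrier G \<Longrightarrow> act (inv g) (act g q) = q"
  by (simp flip: act_mult)

lemma act_eq_act_iff:
  assumes "g \<in> carrier G" "h \<in> carrier G"
  shows "act g q = act h q \<longleftrightarrow> g = h"
proof
  assume "act g q = act h q"
  then have "act (inv h \<otimes> g) q = q"
    using assms by (simp add: act_mult)
  then have "inv h \<otimes> g = \<one>"
    using assms by (intro act_fixed_point) auto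
  then show "g = h"
    using assms inv_solve_left' by fastforce
qed simp

lemma orb_eq_orb_iff: "orb G act a = orb G act b \<longleftrightarrow> (\<exists>g\<in>carrier G. a = act g b)"
proof
  assume "orb G act a = orb G act b"
  moreover have "a \<in> orb G act a"
    unfolding orb_def by (metis (mono_tags, lifting) act_one mem_Collect_eq one_closed)
  ultimately show "\<exists>g\<in>carrier G. a = act g b"
    unfolding orb_def by blast
next
  assume "\<exists>g\<in>carrier G. a = act g b"
  then obtain g where g: "g \<in> carrier G" "a = act g b" by blast
  have "act h a = act (h \<otimes> g) b" "act h b = act (h \<otimes> inv g) a" if "h \<in> carrier G" for h
    using g that by (simp_all add: act_mult)
  then show "orb G act a = orb G act b"
    using g unfolding orb_def by (blast intro: m_closed inv_closed)
qed

lemma aclass_eq_aclass_iff: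
  "aclass G act a b = aclass G act a' b' \<longleftrightarrow> (\<exists>g\<in>carrier G. a' = act g a \<and> b' = act g b)"
proof
  have "(a', b') \<in> aclass G act a' b'"
    unfolding aclass_def by (metis (mono_tags, lifting) act_one mem_Collect_eq one_closed)
  moreover assume "aclass G act a b = aclass G act a' b'"
  ultimately have "(a', b') \<in> aclass G act a b" by simp
  then show "\<exists>g\<in>carrier G. a' = act g a \<and> b' = act g b"
    unfolding aclass_def by auto
next
  assume "\<exists>g\<in>carrier G. a' = act g a \<and> b' = act g b"
  then obtain g where g: "g \<in> carrier G" "a' = act g a" "b' = act g b" by blast
  have "act h a' = act (h \<otimes> g) a" "act h b' = act (h \<otimes> g) b"
       "act h a = act (h \<otimes> inv g) a'" "act h b = act (h \<otimes> inv g) b'" if "h \<in> carrier G" for h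
    using g that by (simp_all add: act_mult)
  then show "aclass G act a b = aclass G act a' b'"
    using g unfolding aclass_def by (blast intro: m_closed inv_closed)
qed

lemma aclass_act: "g \<in> carrier G \<Longrightarrow> aclass G act (act g a) (act g b) = aclass G act a b"
  using aclass_eq_aclass_iff by metis

lemma aclass_eq_aclass_same_fst_iff: "aclass G act a b = aclass G act a b' \<longleftrightarrow> b = b'"
  by (metis aclass_eq_aclass_iff act_fixed_point act_one)

lemma F2_aclass: "F2 G act (aclass G act a b) = (orb G act a, orb G act b)"
  unfolding F2_def
proof (rule some_equality)
  fix r assume "\<exists>a' b'. aclass G act a b = aclass G act a' b' \<and> r = (orb G act a', orb G act b')"
  then show "r = (orb G act a, orb G act b)"
    by (metis aclass_eq_aclass_iff orb_eq_orb_iff)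
qed blast

lemma atiyah_mult_aclass:
  "atiyah_mult G act (aclass G act a b) (aclass G act b c) = aclass G act a c"
  unfolding atiyah_mult_def
proof (rule some_equality)
  fix x assume "\<exists>a' b' c'. aclass G act a b = aclass G act a' b'
    \<and> aclass G act b c = aclass G act b' c' \<and> x = aclass G act a' c'"
  then obtain a' b' c' g h where
    "x = aclass G act a' c'" "g \<in> carrier G" "a' = act g a" "b' = act g b"
    "h \<in> carrier G" "b' = act h b" "c' = act h c"
    unfolding aclass_eq_aclass_iff by blast
  then show "x = aclass G act a c"
    by (metis act_eq_act_iff aclass_act)
qed blast

lemma atiyah_unit_orb: "lg_unit (atiyah_lgpd G act W) (orb G act q) = aclass G act q q"
  unfolding atiyah_lgpd_def lgpd.simps
proof (rule some_equality)
  fix c assume "\<exists>q'. orb G act q = orb G act q' \<and> c = aclass G act q' q'"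
  then show "c = aclass G act q q"
    by (metis orb_eq_orb_iff aclass_act)
qed blast

lemma atiyah_mult_eq_iff_curvature_one:
  assumes a: "a\<^sub>0\<^sub>1 \<in> carrier G" "a\<^sub>1\<^sub>2 \<in> carrier G" "a\<^sub>0\<^sub>2 \<in> carrier G"
  shows "atiyah_mult G act (aclass G act q\<^sub>0 (act (inv a\<^sub>0\<^sub>1) q\<^sub>1)) (aclass G act q\<^sub>1 (act (inv a\<^sub>1\<^sub>2) q\<^sub>2))
           = aclass G act q\<^sub>0 (act (inv a\<^sub>0\<^sub>2) q\<^sub>2)
         \<longleftrightarrow> inv a\<^sub>0\<^sub>2 \<otimes> a\<^sub>1\<^sub>2 \<otimes> a\<^sub>0\<^sub>1 = \<one>"
proof -
  have "aclass G act q\<^sub>1 (act (inv a\<^sub>1\<^sub>2) q\<^sub>2)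
      = aclass G act (act (inv a\<^sub>0\<^sub>1) q\<^sub>1) (act (inv (a\<^sub>1\<^sub>2 \<otimes> a\<^sub>0\<^sub>1)) q\<^sub>2)"
    using a aclass_act[of "inv a\<^sub>0\<^sub>1"] by (simp add: inv_mult_group act_mult)
  then have "atiyah_mult G act (aclass G act q\<^sub>0 (act (inv a\<^sub>0\<^sub>1) q\<^sub>1)) (aclass G act q\<^sub>1 (act (inv a\<^sub>1\<^sub>2) q\<^sub>2))
      = aclass G act q\<^sub>0 (act (inv (a\<^sub>1\<^sub>2 \<otimes> a\<^sub>0\<^sub>1)) q\<^sub>2)"
    by (simp add: atiyah_mult_aclass)
  also have "\<dots> = aclass G act q\<^sub>0 (act (inv a\<^sub>0\<^sub>2) q\<^sub>2) \<longleftrightarrow> a\<^sub>1\<^sub>2 \<otimes> a\<^sub>0\<^sub>1 = a\<^sub>0\<^sub>2"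
    using a by (simp add: aclass_eq_aclass_same_fst_iff act_eq_act_iff inj_on_eq_iff[OF inv_inj])
  also have "\<dots> \<longleftrightarrow> inv a\<^sub>0\<^sub>2 \<otimes> a\<^sub>1\<^sub>2 \<otimes> a\<^sub>0\<^sub>1 = \<one>"
    using a by (simp add: m_assoc inv_solve_left')
  finally show ?thesis .
qed

lemma lg_morphism_pair_atiyah_iff:
  assumes into: "\<forall>r\<in>V. sR r \<in> W"
    and split: "\<forall>r\<in>V. F2 G act (sR r) = r"
    and unit: "\<forall>q. sR (orb G act q, orb G act q) = aclass G act q q"
  shows "lg_morphism (pair_lgpd (range (orb G act)) V) (atiyah_lgpd G act W) sR
    \<longleftrightarrow> (\<forall>r\<^sub>0 r\<^sub>1 r\<^sub>2. (r\<^sub>0, r\<^sub>1) \<in> V \<longrightarrow> (r\<^sub>1, r\<^sub>2) \<in> V \<longrightarrow> (r\<^sub>0, r\<^sub>2) \<in> V \<longrightarrow>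
          atiyah_mult G act (sR (r\<^sub>0, r\<^sub>1)) (sR (r\<^sub>1, r\<^sub>2)) = sR (r\<^sub>0, r\<^sub>2))"
proof -
  have units: "sR ` (\<lambda>r. (r, r)) ` range (orb G act)
      \<subseteq> lg_unit (atiyah_lgpd G act W) ` range (orb G act)"
  proof clarify
    fix q
    have "sR (orb G act q, orb G act q) = lg_unit (atiyah_lgpd G act W) (orb G act q)"
      by (simp only: unit atiyah_unit_orb)
    then show "sR (orb G act q, orb G act q) \<in> lg_unit (atiyah_lgpd G act W) ` range (orb G act)"
      by blast
  qed
  have composable: "atiyah_tgt G act (sR (r\<^sub>0, r\<^sub>1)) = atiyah_src G act (sR (r\<^sub>1, r\<^sub>2))"
    if "(r\<^sub>0, r\<^sub>1) \<in> V" "(r\<^sub>1, r\<^sub>2) \<in> V" for r\<^sub>0 r\<^sub>1 r\<^sub>2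
    using that split by (simp add: atiyah_src_def atiyah_tgt_def)
  show ?thesis
    unfolding lg_morphism_def using into units composable
    by (auto simp: pair_lgpd_def atiyah_lgpd_def)
qed

lemma orb_pair_in_Upp_iff:
  assumes invariant: "\<forall>(q\<^sub>0, q\<^sub>1)\<in>U. \<forall>g\<^sub>0\<in>carrier G. \<forall>g\<^sub>1\<in>carrier G. (act g\<^sub>0 q\<^sub>0, act g\<^sub>1 q\<^sub>1) \<in> U"
  shows "(orb G act a, orb G act b) \<in> Upp G act U \<longleftrightarrow> (a, b) \<in> U"
proof
  assume "(orb G act a, orb G act b) \<in> Upp G act U"
  then obtain q\<^sub>0 q\<^sub>1 where "(q\<^sub>0, q\<^sub>1) \<in> U" "orb G act a = orb G act q\<^sub>0" "orb G act b = orb G act q\<^sub>1"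
    unfolding Upp_def by auto
  then show "(a, b) \<in> U"
    using invariant unfolding orb_eq_orb_iff by blast
qed (auto simp: Upp_def)

lemma all_composable_Upp_iff:
  assumes invariant: "\<forall>(q\<^sub>0, q\<^sub>1)\<in>U. \<forall>g\<^sub>0\<in>carrier G. \<forall>g\<^sub>1\<in>carrier G. (act g\<^sub>0 q\<^sub>0, act g\<^sub>1 q\<^sub>1) \<in> U"
  shows "(\<forall>r\<^sub>0 r\<^sub>1 r\<^sub>2. (r\<^sub>0, r\<^sub>1) \<in> Upp G act U \<longrightarrow> (r\<^sub>1, r\<^sub>2) \<in> Upp G act U \<longrightarrow>
            (r\<^sub>0, r\<^sub>2) \<in> Upp G act U \<longrightarrow> P r\<^sub>0 r\<^sub>1 r\<^sub>2)
    \<longleftrightarrow> (\<forall>q\<^sub>0 q\<^sub>1 q\<^sub>2. (q\<^sub>0, q\<^sub>1) \<in> U \<longrightarrow> (q\<^sub>1, q\<^sub>2) \<in> U \<longrightarrow> (q\<^sub>0, q\<^sub>2) \<in> U \<longrightarrow>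
            P (orb G act q\<^sub>0) (orb G act q\<^sub>1) (orb G act q\<^sub>2))"
proof (intro iffI allI impI)
  fix q\<^sub>0 q\<^sub>1 q\<^sub>2
  assume "\<forall>r\<^sub>0 r\<^sub>1 r\<^sub>2. (r\<^sub>0, r\<^sub>1) \<in> Upp G act U \<longrightarrow> (r\<^sub>1, r\<^sub>2) \<in> Upp G act U \<longrightarrow>
            (r\<^sub>0, r\<^sub>2) \<in> Upp G act U \<longrightarrow> P r\<^sub>0 r\<^sub>1 r\<^sub>2"
    and "(q\<^sub>0, q\<^sub>1) \<in> U" "(q\<^sub>1, q\<^sub>2) \<in> U" "(q\<^sub>0, q\<^sub>2) \<in> U"
  then show "P (orb G act q\<^sub>0) (orb G act q\<^sub>1) (orb G act q\<^sub>2)"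
    by (simp add: orb_pair_in_Upp_iff[OF invariant])
next
  fix r\<^sub>0 r\<^sub>1 r\<^sub>2
  assume P: "\<forall>q\<^sub>0 q\<^sub>1 q\<^sub>2. (q\<^sub>0, q\<^sub>1) \<in> U \<longrightarrow> (q\<^sub>1, q\<^sub>2) \<in> U \<longrightarrow> (q\<^sub>0, q\<^sub>2) \<in> U \<longrightarrow>
            P (orb G act q\<^sub>0) (orb G act q\<^sub>1) (orb G act q\<^sub>2)"
    and r: "(r\<^sub>0, r\<^sub>1) \<in> Upp G act U" "(r\<^sub>1, r\<^sub>2) \<in> Upp G act U" "(r\<^sub>0, r\<^sub>2) \<in> Upp G act U"
  obtain q\<^sub>0 q\<^sub>1 q\<^sub>2 where "r\<^sub>0 = orb G act q\<^sub>0" "r\<^sub>1 = orb G act q\<^sub>1" "r\<^sub>2 = orb G act q\<^sub>2"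
    using r(1,2) unfolding Upp_def by auto
  with P r show "P r\<^sub>0 r\<^sub>1 r\<^sub>2"
    by (simp add: orb_pair_in_Upp_iff[OF invariant])
qed

lemma diag_in_Vd: "(q, q) \<in> Vd G act"
  unfolding Vd_def by (metis (mono_tags, lifting) act_one mem_Collect_eq one_closed)

end

lemma flat_iff_composable_triples:
  assumes "symmetric_set U" "\<forall>q. (q, q) \<in> U"
  shows "flat G U Ad \<longleftrightarrow> (\<forall>q\<^sub>0 q\<^sub>1 q\<^sub>2. (q\<^sub>0, q\<^sub>1) \<in> U \<longrightarrow> (q\<^sub>1, q\<^sub>2) \<in> U \<longrightarrow> (q\<^sub>0, q\<^sub>2) \<in> U \<longrightarrow>
           discrete_curvature G Ad q\<^sub>0 q\<^sub>1 q\<^sub>2 = \<one>\<^bsub>G\<^esub>)"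
proof -
  have "(q\<^sub>0, q\<^sub>1, q\<^sub>2) \<in> U3 U \<longleftrightarrow> (q\<^sub>0, q\<^sub>1) \<in> U \<and> (q\<^sub>1, q\<^sub>2) \<in> U \<and> (q\<^sub>0, q\<^sub>2) \<in> U"
    for q\<^sub>0 q\<^sub>1 q\<^sub>2
    using assms unfolding U3_def symmetric_set_def by fast
  then show ?thesis
    unfolding flat_def by (simp add: Ball_def split_paired_All) blast
qed

theorem proposition5p20:
  fixes G :: "('g, 'b) monoid_scheme"
    and act :: "'g \<Rightarrow> 'q::topological_space \<Rightarrow> 'q"
    and U :: "('q \<times> 'q) set"
    and sR :: "'q set \<times> 'q set \<Rightarrow> ('q \<times> 'q) set"
    and Ad :: "'q \<Rightarrow> 'q \<Rightarrow> 'g"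
  assumes act: "free_left_action G act"
    and Dtype: "D_type G act U"
    and sym: "symmetric_set U"
    and sR_into: "\<forall>r\<in>Upp G act U. sR r \<in> UmodG G act U"
    and sR_split: "\<forall>r\<in>Upp G act U. F2 G act (sR r) = r"
    and sR_unit: "\<forall>q. sR (orb G act q, orb G act q) = aclass G act q q"
    and Ad_closed: "\<forall>(q0,q1)\<in>U. Ad q0 q1 \<in> carrier G"
    and Ad_equiv: "\<forall>(q0,q1)\<in>U. \<forall>g0\<in>carrier G. \<forall>g1\<in>carrier G.
        Ad (act g0 q0) (act g1 q1) = g1 \<otimes>\<^bsub>G\<^esub> Ad q0 q1 \<otimes>\<^bsub>G\<^esub> inv\<^bsub>G\<^esub> g0"
    and Ad_diag: "\<forall>q. Ad q q = \<one>\<^bsub>G\<^esub>"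
    and Ad_sR: "\<forall>(q0,q1)\<in>U.
        sR (orb G act q0, orb G act q1) = aclass G act q0 (act (inv\<^bsub>G\<^esub> (Ad q0 q1)) q1)"
  shows "lg_morphism (pair_lgpd (range (orb G act)) (Upp G act U)) (atiyah_lgpd G act (UmodG G act U)) sR
         \<longleftrightarrow> flat G U Ad"
proof -
  interpret free_action G act
    using act by (rule free_action.intro)
  have invariant: "\<forall>(q\<^sub>0, q\<^sub>1)\<in>U. \<forall>g\<^sub>0\<in>carrier G. \<forall>g\<^sub>1\<in>carrier G. (act g\<^sub>0 q\<^sub>0, act g\<^sub>1 q\<^sub>1) \<in> U"
    and diag: "\<forall>q. (q, q) \<in> U"
    using Dtype diag_in_Vd unfolding D_type_def by blast+
  have triangle: "atiyah_mult G act (sR (orb G act q\<^sub>0, orb G act q\<^sub>1)) (sR (orb G act q\<^sub>1, orb G act q\<^sub>2))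
      = sR (orb G act q\<^sub>0, orb G act q\<^sub>2) \<longleftrightarrow> discrete_curvature G Ad q\<^sub>0 q\<^sub>1 q\<^sub>2 = \<one>\<^bsub>G\<^esub>"
    if "(q\<^sub>0, q\<^sub>1) \<in> U" "(q\<^sub>1, q\<^sub>2) \<in> U" "(q\<^sub>0, q\<^sub>2) \<in> U" for q\<^sub>0 q\<^sub>1 q\<^sub>2
  proof -
    have "sR (orb G act q\<^sub>i, orb G act q\<^sub>j) = aclass G act q\<^sub>i (act (inv\<^bsub>G\<^esub> (Ad q\<^sub>i q\<^sub>j)) q\<^sub>j)"
      and "Ad q\<^sub>i q\<^sub>j \<in> carrier G" if "(q\<^sub>i, q\<^sub>j) \<in> U" for q\<^sub>i q\<^sub>j
      using that Ad_sR Ad_closed by auto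
    with that show ?thesis
      by (simp add: atiyah_mult_eq_iff_curvature_one discrete_curvature_def)
  qed
  have "lg_morphism (pair_lgpd (range (orb G act)) (Upp G act U)) (atiyah_lgpd G act (UmodG G act U)) sR
    \<longleftrightarrow> (\<forall>r\<^sub>0 r\<^sub>1 r\<^sub>2. (r\<^sub>0, r\<^sub>1) \<in> Upp G act U \<longrightarrow> (r\<^sub>1, r\<^sub>2) \<in> Upp G act U \<longrightarrow>
          (r\<^sub>0, r\<^sub>2) \<in> Upp G act U \<longrightarrow> atiyah_mult G act (sR (r\<^sub>0, r\<^sub>1)) (sR (r\<^sub>1, r\<^sub>2)) = sR (r\<^sub>0, r\<^sub>2))"
    using sR_into sR_split sR_unit by (rule lg_morphism_pair_atiyah_iff)
  also have "\<dots> \<longleftrightarrow> (\<forall>q\<^sub>0 q\<^sub>1 q\<^sub>2. (q\<^sub>0, q\<^sub>1) \<in> U \<longrightarrow> (q\<^sub>1, q\<^sub>2) \<in> U \<longrightarrow> (q\<^sub>0, q\<^sub>2) \<in> U \<longrightarrow>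
          atiyah_mult G act (sR (orb G act q\<^sub>0, orb G act q\<^sub>1)) (sR (orb G act q\<^sub>1, orb G act q\<^sub>2))
            = sR (orb G act q\<^sub>0, orb G act q\<^sub>2))"
    using invariant by (rule all_composable_Upp_iff)
  also have "\<dots> \<longleftrightarrow> flat G U Ad"
    unfolding flat_iff_composable_triples[OF sym diag] using triangle by (simp cong: imp_cong)
  finally show ?thesis .
qed

end
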